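(* Let $K$ be a simplex in a topological vector space $F$ and let $T:K\to 2^{K}$ be a weakly naturally quasiconvex correspondence. Then $T$ has a fixed point, i.e. there exists $x^*\in K$ with $x^*\in T(x^* )$.
   Context: A simplex is the convex hull of a finite affinely independent set. $\Delta_{n-1}=\{(\lambda_1,\dots,\lambda_n)\in\mathbb{R}^n:\sum_{i=1}^n\lambda_i=1,\ \lambda_i\ge 0\}$. Weakly naturally quasiconvex (WNQ): let $X,Y$ be nonempty convex subsets of topological vector spaces. A correspondence $T:X\to 2^{Y}$ is weakly naturally quasiconvex if for each $n\in\mathbb{N}$ and each finite set $\{x_1,\dots,x_n\}\subset X$ there exist $y_i\in T(x_i)$ ($i=1,\dots,n$) and a bijection $g:\Delta_{n-1}\to\Delta_{n-1}$ (depending on $x_1,\dots,x_n$) of the form $g(\lambda_1,\dots,\lambda_n)=(g_1(\lambda_1),\dots,g_n(\lambda_n))$, where each $g_i:[0,1]\to[0,1]$ is continuous with $g_i(0)=0$ and $g_i(1)=1$, such that for every $(\lambda_1,\dots,\lambda_n)\in\Delta_{n-1}$ we have $\sum_{i=1}^n g_i(\lambda_i)y_i\in T\big(\sum_{i=1}^n\lambda_i x_i\big)$. *)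

theory Defs
  imports "HOL-Analysis.Analysis"
begin

class topological_real_vector = real_vector + topological_space +
  assumes continuous_add_tvs:
    "\<And>a b U. open U \<Longrightarrow> a + b \<in> U \<Longrightarrow>
       \<exists>V W. open V \<and> open W \<and> a \<in> V \<and> b \<in> W \<and> (\<forall>v\<in>V. \<forall>w\<in>W. v + w \<in> U)"
  assumes continuous_scaleR_tvs:
    "\<And>c a U. open U \<Longrightarrow> c *\<^sub>R a \<in> U \<Longrightarrow>
       \<exists>e>0. \<exists>W. open W \<and> a \<in> W \<and> (\<forall>t. \<bar>t - c\<bar> < e \<longrightarrow> (\<forall>w\<in>W. t *\<^sub>R w \<in> U))"

definition is_simplex :: "'a::real_vector set \<Rightarrow> bool" where
  "is_simplex K \<longleftrightarrow> (\<exists>S. finite S \<and> \<not> affine_dependent S \<and> K = convex hull S)"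

definition std_simplex :: "nat \<Rightarrow> (nat \<Rightarrow> real) set" where
  "std_simplex n = {l. (\<forall>i<n. 0 \<le> l i) \<and> (\<forall>i. n \<le> i \<longrightarrow> l i = 0) \<and> (\<Sum>i<n. l i) = 1}"

text \<open>Weakly naturally quasiconvex correspondence T : X -> 2^Y.  The finite set
  {x_0,...,x_(n-1)} is given by an injective enumeration.\<close>
definition weakly_nat_quasiconvex ::
    "'a::topological_real_vector set \<Rightarrow> 'b::topological_real_vector set \<Rightarrow> ('a \<Rightarrow> 'b set) \<Rightarrow> bool" where
  "weakly_nat_quasiconvex X Y T \<longleftrightarrow>
     (\<forall>x\<in>X. T x \<subseteq> Y) \<and>
     (\<forall>n::nat. \<forall>x::nat \<Rightarrow> 'a. inj_on x {..<n} \<and> x ` {..<n} \<subseteq> X \<longrightarrow>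
        (\<exists>y::nat \<Rightarrow> 'b. \<exists>g::nat \<Rightarrow> real \<Rightarrow> real.
           (\<forall>i<n. y i \<in> T (x i)) \<and>
           (\<forall>i<n. continuous_on {0..1} (g i) \<and> g i ` {0..1} \<subseteq> {0..1} \<and> g i 0 = 0 \<and> g i 1 = 1) \<and>
           bij_betw (\<lambda>l. \<lambda>i. if i < n then g i (l i) else 0) (std_simplex n) (std_simplex n) \<and>
           (\<forall>l\<in>std_simplex n. (\<Sum>i<n. g i (l i) *\<^sub>R y i) \<in> T (\<Sum>i<n. l i *\<^sub>R x i))))"

end

theory Submission
  imports Defs "Jordan_Normal_Form.Determinant"
begin

text \<open>For at least three points the coordinatewise bijection g in the definition of weak natural
  quasiconvexity is forced to be the identity: fixing all but three barycentric coordinates shows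
  that each g i is additive on [0,1], and an additive self-map of [0,1] fixing 1 is the identity.
  Hence T is naturally convex on every finite family of points in K.  Let v 0, ..., v (m-1) be
  the vertices of K (padded with one further point of K, so that there are at least three) and pick
  y i \<in> T (v i) \<subseteq> K.  Writing y i = \<Sum>j. a i j v j with a row-stochastic matrix a, a stationary
  distribution l of a gives \<Sum>i. l i y i = \<Sum>j. l j v j =: x, and natural convexity says
  exactly that x \<in> T x.\<close>

lemma stochastic_matrix_nonzero_left_fixed_vector:
  fixes a :: "nat \<Rightarrow> nat \<Rightarrow> real"
  assumes "0 < m" and rows: "\<forall>i<m. (\<Sum>j<m. a i j) = 1"
  shows "\<exists>u. (\<exists>j<m. u j \<noteq> 0) \<and> (\<forall>j<m. (\<Sum>i<m. u i * a i j) = u j)"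
proof -
  define B :: "real mat" where "B = mat m m (\<lambda>(i, j). a i j - (if i = j then 1 else 0))"
  have B: "B \<in> carrier_mat m m"
    unfolding B_def by simp
  have "B *\<^sub>v vec m (\<lambda>_. 1) = 0\<^sub>v m"
    using rows by (intro eq_vecI)
      (auto simp: B_def index_mult_mat_vec scalar_prod_def lessThan_atLeast0[symmetric] sum_subtractf)
  moreover have "vec m (\<lambda>_. 1) \<noteq> (0\<^sub>v m :: real vec)"
    using \<open>0 < m\<close> by (metis index_vec index_zero_vec(1) zero_neq_one)
  ultimately have "det B = 0"
    using det_0_iff_vec_prod_zero_field[OF B] vec_carrier[of m "\<lambda>_. 1"] by blast
  then have "det (transpose_mat B) = 0"
    by (simp add: det_transpose[OF B])
  then obtain u where u: "u \<in> carrier_vec m" "u \<noteq> 0\<^sub>v m" "transpose_mat B *\<^sub>v u = 0\<^sub>v m"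
    using det_0_iff_vec_prod_zero_field[of "transpose_mat B" m] B by auto
  have "(\<Sum>i<m. u $ i * a i j) = u $ j" if "j < m" for j
  proof -
    have "0 = (\<Sum>i<m. (a i j - (if i = j then 1 else 0)) * u $ i)"
      using arg_cong[OF u(3), of "\<lambda>w. w $ j"] that u(1)
      by (simp add: B_def index_mult_mat_vec scalar_prod_def lessThan_atLeast0 mult.commute)
    also have "\<dots> = (\<Sum>i<m. u $ i * a i j) - (\<Sum>i<m. if i = j then u $ i else 0)"
      by (subst sum_subtractf[symmetric]) (rule sum.cong, auto simp: algebra_simps)
    also have "\<dots> = (\<Sum>i<m. u $ i * a i j) - u $ j"
      using that by simp
    finally show ?thesis
      by simp
  qed
  moreover have "\<exists>j<m. u $ j \<noteq> 0"
    using u(1,2) by (metis carrier_vecD eq_vecI index_zero_vec(1,2))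
  ultimately show ?thesis
    by blast
qed

text \<open>A nonnegative stochastic matrix maps the positive part of a left fixed vector to a vector
  that dominates it coordinatewise and has the same total mass, so it is fixed as well.\<close>
lemma stochastic_left_fixed_vector_pos_part:
  fixes a :: "nat \<Rightarrow> nat \<Rightarrow> real"
  assumes nonneg: "\<forall>i<m. \<forall>j<m. 0 \<le> a i j" and rows: "\<forall>i<m. (\<Sum>j<m. a i j) = 1"
    and fixed: "\<forall>j<m. (\<Sum>i<m. u i * a i j) = u j"
  shows "\<forall>j<m. (\<Sum>i<m. max (u i) 0 * a i j) = max (u j) 0"
proof -
  define p where "p i = max (u i) 0" for i
  have ge: "p j \<le> (\<Sum>i<m. p i * a i j)" if "j < m" for j
  proof -
    have "(\<Sum>i<m. u i * a i j) \<le> (\<Sum>i<m. p i * a i j)"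
      using nonneg that by (intro sum_mono) (auto simp: p_def intro: mult_right_mono)
    moreover have "0 \<le> (\<Sum>i<m. p i * a i j)"
      using nonneg that by (intro sum_nonneg) (auto simp: p_def)
    ultimately show ?thesis
      using fixed that by (auto simp: p_def)
  qed
  have "(\<Sum>j<m. \<Sum>i<m. p i * a i j) = (\<Sum>i<m. p i * (\<Sum>j<m. a i j))"
    by (subst sum.swap) (simp add: sum_distrib_left)
  also have "\<dots> = (\<Sum>j<m. p j)"
    using rows by simp
  finally have "(\<Sum>j<m. (\<Sum>i<m. p i * a i j) - p j) = 0"
    by (simp add: sum_subtractf)
  then have "\<forall>j\<in>{..<m}. (\<Sum>i<m. p i * a i j) - p j = 0"
    using ge by (subst (asm) sum_nonneg_eq_0_iff) auto
  then show ?thesis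
    by (auto simp: p_def)
qed

lemma stochastic_matrix_stationary_distribution:
  fixes a :: "nat \<Rightarrow> nat \<Rightarrow> real"
  assumes "0 < m" and nonneg: "\<forall>i<m. \<forall>j<m. 0 \<le> a i j" and rows: "\<forall>i<m. (\<Sum>j<m. a i j) = 1"
  shows "\<exists>l\<in>std_simplex m. \<forall>j<m. (\<Sum>i<m. l i * a i j) = l j"
proof -
  obtain u where u: "\<exists>j<m. u j \<noteq> 0" "\<forall>j<m. (\<Sum>i<m. u i * a i j) = u j"
    using stochastic_matrix_nonzero_left_fixed_vector[OF \<open>0 < m\<close> rows] by blast
  obtain w where w: "\<exists>j<m. 0 < w j" "\<forall>j<m. (\<Sum>i<m. w i * a i j) = w j"
  proof (cases "\<exists>j<m. 0 < u j")
    case False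
    then have "\<exists>j<m. 0 < - u j"
      using u(1) by force
    moreover have "\<forall>j<m. (\<Sum>i<m. - u i * a i j) = - u j"
      using u(2) by (simp add: sum_negf)
    ultimately show ?thesis
      using that[of "\<lambda>i. - u i"] by blast
  qed (use that u(2) in blast)
  define p where "p i = (if i < m then max (w i) 0 else 0)" for i
  define s where "s = (\<Sum>i<m. p i)"
  have p_fixed: "\<forall>j<m. (\<Sum>i<m. p i * a i j) = p j"
    using stochastic_left_fixed_vector_pos_part[OF nonneg rows w(2)] by (simp add: p_def)
  obtain j0 where "j0 < m" "0 < w j0"
    using w(1) by blast
  then have "0 < s"
    unfolding s_def by (intro sum_pos2[of _ j0]) (auto simp: p_def)
  show ?thesis
  proof (intro bexI[of _ "\<lambda>i. p i / s"] allI impI)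
    show "(\<lambda>i. p i / s) \<in> std_simplex m"
      using \<open>0 < s\<close> by (auto simp: std_simplex_def p_def s_def sum_divide_distrib[symmetric])
    show "(\<Sum>i<m. p i / s * a i j) = p j / s" if "j < m" for j
      using p_fixed that by (simp add: sum_divide_distrib[symmetric])
  qed
qed

lemma additive_self_map_unit_interval_eq_id:
  fixes \<phi> :: "real \<Rightarrow> real"
  assumes range: "\<phi> ` {0..1} \<subseteq> {0..1}" and one: "\<phi> 1 = 1"
    and add: "\<And>a b. 0 \<le> a \<Longrightarrow> 0 \<le> b \<Longrightarrow> a + b \<le> 1 \<Longrightarrow> \<phi> (a + b) = \<phi> a + \<phi> b"
    and t: "t \<in> {0..1}"
  shows "\<phi> t = t"
proof -
  have mono: "\<phi> s \<le> \<phi> r" if "0 \<le> s" "s \<le> r" "r \<le> 1" for s r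
    using add[of s "r - s"] range that by (auto simp: image_subset_iff)
  have multiple: "\<phi> (real k / real N) = real k * \<phi> (1 / real N)" if "k \<le> N" for k N
    using that
  proof (induction k)
    case 0
    then show ?case
      using add[of 0 0] by simp
  next
    case (Suc k)
    then have "\<phi> (real k / real N + 1 / real N) = \<phi> (real k / real N) + \<phi> (1 / real N)"
      by (intro add) (auto simp: add_divide_distrib[symmetric] divide_le_eq)
    with Suc show ?case
      by (simp add: add_divide_distrib algebra_simps)
  qed
  have fraction: "\<phi> (real k / real N) = real k / real N" if "k \<le> N" "0 < N" for k N
    using multiple[OF that(1)] multiple[of N N] one that(2) by (simp add: field_simps)
  have close: "\<bar>\<phi> t - t\<bar> \<le> 1 / real N" if "0 < N" for N
  proof (cases "t = 1")
    case False
    define k where "k = nat \<lfloor>real N * t\<rfloor>"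
    have k: "real k \<le> real N * t" "real N * t \<le> real k + 1"
      using t unfolding k_def by simp_all
    have "real N * t < real N"
      using False t that by (simp add: mult_less_cancel_left1)
    then have "k + 1 \<le> N"
      using k by linarith
    moreover have lower: "real k / real N \<le> t" and upper: "t \<le> real (k + 1) / real N"
      using k that by (auto simp: divide_le_eq le_divide_eq mult.commute)
    ultimately have "real k / real N \<le> \<phi> t" "\<phi> t \<le> real (k + 1) / real N"
      using mono[of "real k / real N" t] mono[of t "real (k + 1) / real N"] fraction[of k N]
        fraction[of "k + 1" N] t that by (auto simp: divide_le_eq)
    then show ?thesis
      using lower upper by (simp add: add_divide_distrib)
  qed (use one in simp)
  show ?thesis
  proof (rule ccontr)
    assume "\<phi> t \<noteq> t"
    then have "0 < \<bar>\<phi> t - t\<bar>"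
      by simp
    then obtain n where "inverse (real (Suc n)) < \<bar>\<phi> t - t\<bar>"
      using reals_Archimedean by blast
    then show False
      using close[of "Suc n"] by (simp add: inverse_eq_divide)
  qed
qed

lemma sum_eq_three_terms:
  assumes "finite A" "i \<in> A" "j \<in> A" "k \<in> A" "i \<noteq> j" "i \<noteq> k" "j \<noteq> k"
    and "\<forall>h\<in>A. h \<notin> {i, j, k} \<longrightarrow> f h = 0"
  shows "sum f A = f i + f j + f k"
proof -
  have "sum f A = sum f {i, j, k}"
    using assms by (intro sum.mono_neutral_right) auto
  then show ?thesis
    using assms by (simp add: add.assoc)
qed

text \<open>Three coordinates are needed: for two, the condition g 0 t + g 1 (1 - t) = 1 leaves g 0
  arbitrary.\<close>
lemma simplex_preserving_coordinatewise_map_eq_id: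
  fixes g :: "nat \<Rightarrow> real \<Rightarrow> real"
  assumes "3 \<le> n"
    and g: "\<forall>i<n. g i ` {0..1} \<subseteq> {0..1} \<and> g i 0 = 0 \<and> g i 1 = 1"
    and preserves: "\<forall>l\<in>std_simplex n. (\<Sum>i<n. g i (l i)) = 1"
    and "i < n" "t \<in> {0..1}"
  shows "g i t = t"
proof -
  have three: "g i a + g j b + g k (1 - a - b) = 1"
    if ijk: "i < n" "j < n" "k < n" "i \<noteq> j" "i \<noteq> k" "j \<noteq> k" and "0 \<le> a" "0 \<le> b" "a + b \<le> 1"
    for i j k a b
  proof -
    define l where "l h = (if h = i then a else if h = j then b else if h = k then 1 - a - b else 0)"
      for h
    have "(\<Sum>h<n. l h) = l i + l j + l k"
      by (rule sum_eq_three_terms) (use ijk in \<open>auto simp: l_def\<close>)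
    then have "l \<in> std_simplex n"
      using ijk \<open>0 \<le> a\<close> \<open>0 \<le> b\<close> \<open>a + b \<le> 1\<close> by (auto simp: std_simplex_def l_def)
    then have "(\<Sum>h<n. g h (l h)) = 1"
      using preserves by blast
    moreover have "(\<Sum>h<n. g h (l h)) = g i (l i) + g j (l j) + g k (l k)"
      by (rule sum_eq_three_terms) (use ijk g in \<open>auto simp: l_def\<close>)
    ultimately show ?thesis
      using ijk by (simp add: l_def)
  qed
  have additive: "g i (a + b) = g i a + g j b"
    if "i < n" "j < n" "i \<noteq> j" "0 \<le> a" "0 \<le> b" "a + b \<le> 1" for i j a b
  proof -
    define k :: nat where "k = (if i \<noteq> 0 \<and> j \<noteq> 0 then 0 else if i \<noteq> 1 \<and> j \<noteq> 1 then 1 else 2)"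
    have "k < n" "k \<noteq> i" "k \<noteq> j"
      using \<open>3 \<le> n\<close> \<open>i \<noteq> j\<close> by (auto simp: k_def)
    then show ?thesis
      using three[of i j k a b] three[of i j k "a + b" 0] g that by (auto simp: diff_diff_eq)
  qed
  have same: "g i s = g 0 s" if "i < n" "s \<in> {0..1}" for i s
    using additive[of i 0 0 s] g that \<open>3 \<le> n\<close> by (cases "i = 0") auto
  have "g 0 s = s" if "s \<in> {0..1}" for s
  proof (rule additive_self_map_unit_interval_eq_id[OF _ _ _ that])
    show "g 0 ` {0..1} \<subseteq> {0..1}" "g 0 1 = 1"
      using g \<open>3 \<le> n\<close> by auto
    show "g 0 (a + b) = g 0 a + g 0 b" if "0 \<le> a" "0 \<le> b" "a + b \<le> 1" for a b
      using additive[of 0 1 a b] same[of 1 b] that \<open>3 \<le> n\<close> by auto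
  qed
  then show ?thesis
    using same[OF \<open>i < n\<close> \<open>t \<in> {0..1}\<close>] \<open>t \<in> {0..1}\<close> by simp
qed

lemma std_simplex_mono:
  assumes "m \<le> n"
  shows "std_simplex m \<subseteq> std_simplex n"
proof
  fix l assume l: "l \<in> std_simplex m"
  then have "(\<Sum>i<n. l i) = (\<Sum>i<m. l i)"
    using assms by (intro sum.mono_neutral_right) (auto simp: std_simplex_def)
  moreover have "0 \<le> l i" for i
    using l by (cases "i < m") (auto simp: std_simplex_def)
  ultimately show "l \<in> std_simplex n"
    using l assms by (auto simp: std_simplex_def)
qed

lemma weakly_nat_quasiconvex_convex_combinations:
  assumes wnq: "weakly_nat_quasiconvex X Y T" and "3 \<le> n" "m \<le> n"
    and "inj_on x {..<n}" "x ` {..<n} \<subseteq> X"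
  obtains y where "\<forall>i<n. y i \<in> T (x i)"
    and "\<forall>l\<in>std_simplex m. (\<Sum>i<m. l i *\<^sub>R y i) \<in> T (\<Sum>i<m. l i *\<^sub>R x i)"
proof -
  obtain y g where y: "\<forall>i<n. y i \<in> T (x i)"
    and g: "\<forall>i<n. continuous_on {0..1} (g i) \<and> g i ` {0..1} \<subseteq> {0..1} \<and> g i 0 = 0 \<and> g i 1 = 1"
    and bij: "bij_betw (\<lambda>l i. if i < n then g i (l i) else 0) (std_simplex n) (std_simplex n)"
    and comb: "\<forall>l\<in>std_simplex n. (\<Sum>i<n. g i (l i) *\<^sub>R y i) \<in> T (\<Sum>i<n. l i *\<^sub>R x i)"
    using wnq assms(4,5) unfolding weakly_nat_quasiconvex_def by blast
  have "\<forall>l\<in>std_simplex n. (\<Sum>i<n. g i (l i)) = 1"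
    using bij_betw_apply[OF bij] by (simp add: std_simplex_def)
  then have g_id: "g i t = t" if "i < n" "t \<in> {0..1}" for i t
    using simplex_preserving_coordinatewise_map_eq_id[OF \<open>3 \<le> n\<close>] g that by blast
  have "(\<Sum>i<m. l i *\<^sub>R y i) \<in> T (\<Sum>i<m. l i *\<^sub>R x i)" if l: "l \<in> std_simplex m" for l
  proof -
    have ln: "l \<in> std_simplex n"
      using std_simplex_mono[OF \<open>m \<le> n\<close>] l by blast
    have unit: "l i \<in> {0..1}" if "i < n" for i
      using ln that member_le_sum[of i "{..<n}" l] by (auto simp: std_simplex_def)
    have drop: "(\<Sum>i<n. l i *\<^sub>R y i) = (\<Sum>i<m. l i *\<^sub>R y i)"
      "(\<Sum>i<n. l i *\<^sub>R x i) = (\<Sum>i<m. l i *\<^sub>R x i)"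
      using l \<open>m \<le> n\<close> by (auto simp: std_simplex_def not_le[symmetric] intro!: sum.mono_neutral_right)
    have "(\<Sum>i<n. g i (l i) *\<^sub>R y i) \<in> T (\<Sum>i<n. l i *\<^sub>R x i)"
      using comb ln by blast
    moreover have "(\<Sum>i<n. g i (l i) *\<^sub>R y i) = (\<Sum>i<n. l i *\<^sub>R y i)"
      using g_id unit by simp
    ultimately show ?thesis
      by (simp only: drop)
  qed
  then show ?thesis
    using that y by blast
qed

lemma convex_hull_vertex_images_common_combination:
  fixes v y :: "nat \<Rightarrow> 'a::real_vector"
  assumes "0 < m" and y: "\<forall>i<m. y i \<in> convex hull (v ` {..<m})"
  obtains l where "l \<in> std_simplex m" "(\<Sum>i<m. l i *\<^sub>R y i) = (\<Sum>j<m. l j *\<^sub>R v j)"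
proof -
  have "\<forall>i\<in>{..<m}. \<exists>c. (\<forall>j<m. 0 \<le> c j) \<and> (\<Sum>j<m. c j) = 1 \<and> y i = (\<Sum>j<m. c j *\<^sub>R v j)"
  proof
    fix i assume "i \<in> {..<m}"
    have "v ` {..<m} = (\<Union>j<m. {v j})"
      by auto
    then have "y i \<in> {\<Sum>j<m. c j *\<^sub>R s j |c s.
        (\<forall>j\<in>{..<m}. 0 \<le> c j) \<and> sum c {..<m} = 1 \<and> (\<forall>j\<in>{..<m}. s j \<in> {v j})}"
      using y \<open>i \<in> {..<m}\<close> convex_hull_finite_union[of "{..<m}" "\<lambda>j. {v j}"] by simp
    then obtain c s where "y i = (\<Sum>j<m. c j *\<^sub>R s j)" "\<forall>j\<in>{..<m}. 0 \<le> c j"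
      "sum c {..<m} = 1" "\<forall>j\<in>{..<m}. s j = v j"
      by blast
    then show "\<exists>c. (\<forall>j<m. 0 \<le> c j) \<and> (\<Sum>j<m. c j) = 1 \<and> y i = (\<Sum>j<m. c j *\<^sub>R v j)"
      by (metis (no_types, lifting) lessThan_iff sum.cong)
  qed
  from bchoice[OF this] obtain a
    where a: "\<forall>i\<in>{..<m}. (\<forall>j<m. 0 \<le> a i j) \<and> (\<Sum>j<m. a i j) = 1 \<and> y i = (\<Sum>j<m. a i j *\<^sub>R v j)"
    by blast
  then have "\<forall>i<m. \<forall>j<m. 0 \<le> a i j" "\<forall>i<m. (\<Sum>j<m. a i j) = 1"
    by auto
  then obtain l where l: "l \<in> std_simplex m" "\<forall>j<m. (\<Sum>i<m. l i * a i j) = l j"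
    using stochastic_matrix_stationary_distribution[OF \<open>0 < m\<close>] by blast
  have "(\<Sum>i<m. l i *\<^sub>R y i) = (\<Sum>i<m. \<Sum>j<m. (l i * a i j) *\<^sub>R v j)"
    using a by (simp add: scaleR_sum_right)
  also have "\<dots> = (\<Sum>j<m. (\<Sum>i<m. l i * a i j) *\<^sub>R v j)"
    by (subst sum.swap) (simp add: scaleR_sum_left)
  also have "\<dots> = (\<Sum>j<m. l j *\<^sub>R v j)"
    using l(2) by simp
  finally show ?thesis
    using that l(1) by blast
qed

lemma convex_infinite_if_two_points:
  fixes K :: "'a::real_vector set"
  assumes "convex K" "a \<in> K" "b \<in> K" "a \<noteq> b"
  shows "infinite K"
  by (metis assms closed_segment_subset finite_closed_segment finite_subset)

lemma inj_on_lessThan_extend: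
  assumes "infinite K" "inj_on v {..<m}" "v ` {..<m} \<subseteq> K"
  obtains x where "inj_on x {..<Suc m}" "x ` {..<Suc m} \<subseteq> K" "\<forall>i<m. x i = v i"
proof -
  obtain w where "w \<in> K - v ` {..<m}"
    using Diff_infinite_finite[OF finite_imageI assms(1)] by (metis finite_lessThan infinite_imp_nonempty ex_in_conv)
  then show ?thesis
    using that[of "v(m := w)"] assms(2,3) by (auto simp: lessThan_Suc inj_on_def)
qed

lemma weakly_nat_quasiconvex_nonempty_value:
  assumes "weakly_nat_quasiconvex X Y T" "a \<in> X"
  shows "T a \<noteq> {}"
proof -
  have "inj_on (\<lambda>_. a) {..<1::nat}" "(\<lambda>_. a) ` {..<1::nat} \<subseteq> X"
    using assms(2) by (auto simp: inj_on_def)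
  then show ?thesis
    using assms(1) unfolding weakly_nat_quasiconvex_def by fastforce
qed

lemma weakly_nat_quasiconvex_fixed_point_convex_hull:
  fixes v :: "nat \<Rightarrow> 'a::topological_real_vector"
  assumes wnq: "weakly_nat_quasiconvex K K T" and K: "K = convex hull (v ` {..<m})"
    and v: "inj_on v {..<m}" and "1 < m"
  shows "\<exists>x\<in>K. x \<in> T x"
proof -
  have vK: "v ` {..<m} \<subseteq> K"
    unfolding K by (rule hull_subset)
  have "convex K" "v 0 \<in> K" "v 1 \<in> K" "v 0 \<noteq> v 1"
    using K vK inj_onD[OF v, of 0 1] \<open>1 < m\<close> by auto
  then have "infinite K"
    by (rule convex_infinite_if_two_points)
  then obtain x where x: "inj_on x {..<Suc m}" "x ` {..<Suc m} \<subseteq> K" "\<forall>i<m. x i = v i"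
    using inj_on_lessThan_extend v vK by metis
  obtain y where y: "\<forall>i<Suc m. y i \<in> T (x i)"
    and comb: "\<forall>l\<in>std_simplex m. (\<Sum>i<m. l i *\<^sub>R y i) \<in> T (\<Sum>i<m. l i *\<^sub>R x i)"
    using weakly_nat_quasiconvex_convex_combinations[OF wnq _ le_SucI[OF order_refl] x(1,2)]
      \<open>1 < m\<close> by auto
  have "y i \<in> K" if "i < m" for i
  proof -
    have "y i \<in> T (v i)"
      using y x(3) that less_SucI by metis
    moreover have "v i \<in> K"
      using vK that by auto
    ultimately show ?thesis
      using wnq unfolding weakly_nat_quasiconvex_def by blast
  qed
  then obtain l where l: "l \<in> std_simplex m" "(\<Sum>i<m. l i *\<^sub>R y i) = (\<Sum>j<m. l j *\<^sub>R v j)"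
    using convex_hull_vertex_images_common_combination[of m y v] \<open>1 < m\<close> K by auto
  have "(\<Sum>j<m. l j *\<^sub>R v j) \<in> K"
    using l(1) vK K by (intro convex_sum) (auto simp: std_simplex_def)
  moreover have "(\<Sum>i<m. l i *\<^sub>R x i) = (\<Sum>j<m. l j *\<^sub>R v j)"
    using x(3) by simp
  ultimately show ?thesis
    using comb l by force
qed

theorem theorem4:
  fixes K :: "'a::topological_real_vector set" and T :: "'a \<Rightarrow> 'a set"
  assumes "K \<noteq> {}" and "is_simplex K"
    and "weakly_nat_quasiconvex K K T"
  shows "\<exists>x\<in>K. x \<in> T x"
proof -
  obtain S where S: "finite S" "K = convex hull S"
    using assms(2) unfolding is_simplex_def by blast
  define m where "m = card S"
  obtain v where "bij_betw v {..<m} S"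
    using ex_bij_betw_nat_finite[OF S(1)] by (auto simp: m_def lessThan_atLeast0)
  then have v: "inj_on v {..<m}" and K: "K = convex hull (v ` {..<m})"
    using S(2) by (auto simp: bij_betw_def)
  have "0 < m"
    using assms(1) S by (auto simp: m_def card_gt_0_iff)
  show ?thesis
  proof (cases "m = 1")
    case True
    then have "K = {v 0}"
      using K by (simp add: lessThan_Suc)
    moreover have "\<forall>x\<in>K. T x \<subseteq> K"
      using assms(3) unfolding weakly_nat_quasiconvex_def by blast
    ultimately show ?thesis
      using weakly_nat_quasiconvex_nonempty_value[OF assms(3)] by blast
  next
    case False
    then show ?thesis
      using weakly_nat_quasiconvex_fixed_point_convex_hull[OF assms(3) K v] \<open>0 < m\<close> by simp
  qed
qed

end
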